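(* Let $\widetilde\Delta$ be a graph without isolated vertices, let $\ell:D(\widetilde\Delta)\to N$ be a voltage assignment, and let $\widetilde\Gamma$ be the lift of $\widetilde\Delta$ with respect to $\ell$. Then the following are equivalent: (i) for all $u,v,w\in V(\widetilde\Delta)$ with $u\sim v$ and $v\perp w$ we have $\ell(w,u)=\ell(w,v)$; (ii) for all $(u,m),(v,n)\in V(\widetilde\Gamma)$, we have $(u,m)\sim(v,n)$ if and only if $m=n$ and $u\sim v$.
   Context: Graphs are simple and undirected; $u\perp v$ denotes adjacency and $D(\Delta)$ is the set of darts (ordered pairs of adjacent vertices). A voltage assignment is a map $\ell:D(\Delta)\to N$ into a group with $\ell(u,v)=\ell(v,u)^{-1}$; the lift has vertex set $V(\Delta)\times N$ with $(u,m)\perp(v,n)$ iff $u\perp v$ and $\ell(u,v)=mn^{-1}$. In any graph, $u\sim v$ means that $u$ and $v$ have the same set of neighbours. *)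

theory Defs
  imports Main
begin

definition simple_graph :: "'a set \<Rightarrow> ('a \<Rightarrow> 'a \<Rightarrow> bool) \<Rightarrow> bool" where
  "simple_graph V E \<longleftrightarrow>
     (\<forall>u v. E u v \<longrightarrow> u \<in> V \<and> v \<in> V) \<and>
     (\<forall>u v. E u v \<longrightarrow> E v u) \<and>
     (\<forall>u. \<not> E u u)"

definition no_isolated :: "'a set \<Rightarrow> ('a \<Rightarrow> 'a \<Rightarrow> bool) \<Rightarrow> bool" where
  "no_isolated V E \<longleftrightarrow> (\<forall>u\<in>V. \<exists>v. E u v)"

text \<open>Voltage assignment into a group (written additively, not necessarily
  commutative): l(u,v) = l(v,u)^{-1} on every dart (u,v).\<close>
definition voltage :: "('a \<Rightarrow> 'a \<Rightarrow> bool) \<Rightarrow> ('a \<Rightarrow> 'a \<Rightarrow> 'g::group_add) \<Rightarrow> bool" where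
  "voltage E l \<longleftrightarrow> (\<forall>u v. E u v \<longrightarrow> l u v = - l v u)"

text \<open>Adjacency of the lift: (u,m) adjacent (v,n) iff u adj v and l(u,v) = m n^{-1}.
  Vertex set of the lift is V \<times> UNIV.\<close>
definition lift_adj :: "('a \<Rightarrow> 'a \<Rightarrow> bool) \<Rightarrow> ('a \<Rightarrow> 'a \<Rightarrow> 'g::group_add)
    \<Rightarrow> 'a \<times> 'g \<Rightarrow> 'a \<times> 'g \<Rightarrow> bool" where
  "lift_adj E l x y \<longleftrightarrow> E (fst x) (fst y) \<and> l (fst x) (fst y) = snd x + - snd y"

definition same_nbhd :: "('a \<Rightarrow> 'a \<Rightarrow> bool) \<Rightarrow> 'a \<Rightarrow> 'a \<Rightarrow> bool" where
  "same_nbhd E u v \<longleftrightarrow> {w. E u w} = {w. E v w}"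

end

theory Submission
  imports Defs
begin

text \<open>The lift neighbourhood of \<open>(u, m)\<close> is the graph of \<open>w \<mapsto> - l u w + m\<close> over the
  neighbourhood of \<open>u\<close>, so \<open>(u, m) \<sim> (v, n)\<close> iff \<open>u \<sim> v\<close> and \<open>- l u w + m = - l v w + n\<close>
  for every neighbour \<open>w\<close> of \<open>u\<close>. Taking \<open>m = n = 0\<close> turns (ii) into \<open>l u w = l v w\<close> for
  \<open>u \<sim> v\<close>, which is (i) by the voltage law; conversely, under (i), evaluating at a neighbour
  of \<open>u\<close> (one exists since \<open>u\<close> is not isolated) forces \<open>m = n\<close>.\<close>

lemma same_nbhd_iff: "same_nbhd E u v \<longleftrightarrow> (\<forall>w. E u w \<longleftrightarrow> E v w)"
  unfolding same_nbhd_def by auto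

lemma lift_adj_Pair_iff: "lift_adj E l (u, m) (w, k) \<longleftrightarrow> E u w \<and> k = - l u w + m"
proof -
  have "l u w = m + - k \<longleftrightarrow> l u w + k = m"
    using eq_diff_eq[of "l u w" m k] by simp
  also have "\<dots> \<longleftrightarrow> k = - l u w + m"
    by auto
  finally have "l u w = m + - k \<longleftrightarrow> k = - l u w + m" .
  then show ?thesis
    unfolding lift_adj_def by auto
qed

lemma same_nbhd_lift_adj_iff:
  "same_nbhd (lift_adj E l) (u, m) (v, n) \<longleftrightarrow>
     same_nbhd E u v \<and> (\<forall>w. E u w \<longrightarrow> - l u w + m = - l v w + n)"
proof
  assume "same_nbhd (lift_adj E l) (u, m) (v, n)"
  then have nbhd: "E u w \<and> k = - l u w + m \<longleftrightarrow> E v w \<and> k = - l v w + n" for w k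
    by (auto simp: same_nbhd_iff lift_adj_Pair_iff)
  have "E u w \<longleftrightarrow> E v w" for w
    using nbhd[of w "- l u w + m"] nbhd[of w "- l v w + n"] by blast
  moreover have "- l u w + m = - l v w + n" if "E u w" for w
    using nbhd[of w "- l u w + m"] that by auto
  ultimately show "same_nbhd E u v \<and> (\<forall>w. E u w \<longrightarrow> - l u w + m = - l v w + n)"
    by (simp add: same_nbhd_iff)
next
  assume "same_nbhd E u v \<and> (\<forall>w. E u w \<longrightarrow> - l u w + m = - l v w + n)"
  then show "same_nbhd (lift_adj E l) (u, m) (v, n)"
    by (auto simp: same_nbhd_iff lift_adj_Pair_iff)
qed

lemma same_nbhd_lift_adj_iff_eq_snd:
  assumes "E u w\<^sub>0"
  shows "(\<forall>m n. same_nbhd (lift_adj E l) (u, m) (v, n) \<longleftrightarrow> m = n \<and> same_nbhd E u v) \<longleftrightarrow>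
           (same_nbhd E u v \<longrightarrow> (\<forall>w. E u w \<longrightarrow> l u w = l v w))"
proof
  assume "\<forall>m n. same_nbhd (lift_adj E l) (u, m) (v, n) \<longleftrightarrow> m = n \<and> same_nbhd E u v"
  then have "same_nbhd E u v \<Longrightarrow> same_nbhd (lift_adj E l) (u, 0) (v, 0)"
    by blast
  then show "same_nbhd E u v \<longrightarrow> (\<forall>w. E u w \<longrightarrow> l u w = l v w)"
    by (simp add: same_nbhd_lift_adj_iff)
next
  assume "same_nbhd E u v \<longrightarrow> (\<forall>w. E u w \<longrightarrow> l u w = l v w)"
  then show "\<forall>m n. same_nbhd (lift_adj E l) (u, m) (v, n) \<longleftrightarrow> m = n \<and> same_nbhd E u v"
    using assms by (auto simp: same_nbhd_lift_adj_iff)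
qed

lemma voltage_reverse_eq_iff:
  assumes "voltage E l" and "E u w" and "E v w"
  shows "l w u = l w v \<longleftrightarrow> l u w = l v w"
  using assms by (auto simp: voltage_def)

lemma same_nbhd_reverse_voltage_iff:
  assumes "simple_graph V E" and "voltage E l"
  shows "(\<forall>w\<in>V. same_nbhd E u v \<and> E v w \<longrightarrow> l w u = l w v) \<longleftrightarrow>
         (same_nbhd E u v \<longrightarrow> (\<forall>w. E u w \<longrightarrow> l u w = l v w))"
proof -
  have "w \<in> V" if "E v w" for w
    using assms(1) that by (simp add: simple_graph_def)
  then show ?thesis
    using voltage_reverse_eq_iff[OF assms(2)] unfolding same_nbhd_iff by blast
qed

theorem lemma2p4:
  fixes V :: "'a set" and E :: "'a \<Rightarrow> 'a \<Rightarrow> bool" and l :: "'a \<Rightarrow> 'a \<Rightarrow> 'g::group_add"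
  assumes "simple_graph V E" and "no_isolated V E" and "voltage E l"
  shows "(\<forall>u\<in>V. \<forall>v\<in>V. \<forall>w\<in>V. same_nbhd E u v \<and> E v w \<longrightarrow> l w u = l w v)
     \<longleftrightarrow> (\<forall>x\<in>V \<times> UNIV. \<forall>y\<in>V \<times> UNIV.
            same_nbhd (lift_adj E l) x y \<longleftrightarrow> snd x = snd y \<and> same_nbhd E (fst x) (fst y))"
proof -
  have pointwise:
    "(\<forall>w\<in>V. same_nbhd E u v \<and> E v w \<longrightarrow> l w u = l w v) \<longleftrightarrow>
     (\<forall>m n. same_nbhd (lift_adj E l) (u, m) (v, n) \<longleftrightarrow> m = n \<and> same_nbhd E u v)" if "u \<in> V" for u v
  proof -
    obtain w\<^sub>0 where "E u w\<^sub>0"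
      using assms(2) \<open>u \<in> V\<close> unfolding no_isolated_def by blast
    then show ?thesis
      by (simp only: same_nbhd_reverse_voltage_iff[OF assms(1,3)] same_nbhd_lift_adj_iff_eq_snd)
  qed
  have "(\<forall>u\<in>V. \<forall>v\<in>V. \<forall>w\<in>V. same_nbhd E u v \<and> E v w \<longrightarrow> l w u = l w v) \<longleftrightarrow>
        (\<forall>u\<in>V. \<forall>v\<in>V. \<forall>m n.
           same_nbhd (lift_adj E l) (u, m) (v, n) \<longleftrightarrow> m = n \<and> same_nbhd E u v)"
    by (simp add: pointwise)
  also have "\<dots> \<longleftrightarrow> (\<forall>x\<in>V \<times> UNIV. \<forall>y\<in>V \<times> UNIV.
            same_nbhd (lift_adj E l) x y \<longleftrightarrow> snd x = snd y \<and> same_nbhd E (fst x) (fst y))"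
    by auto
  finally show ?thesis .
qed

end
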